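(* The infinite measure on $(\tfrac12,1]\times[-1,\infty)$ with density $\frac{1}{(1+xy)^2}$ (with respect to $dx\,dy$) is $\bar F$-invariant.
   Context: $\bar F:(\tfrac12,1]\times[-1,\infty)\to(\tfrac12,1]\times[-1,\infty)$ (defined Lebesgue-a.e.) is given by $\bar F(x,y)=\left(\frac1x-1,\ \frac{1}{1+y}\right)$ if $x\in(\tfrac12,\tfrac23]$ and $\bar F(x,y)=\left(-\frac1x+2,\ \frac{-1}{2+y}\right)$ if $x\in(\tfrac23,1]$. Invariance means $m(\bar F^{-1}(E))=m(E)$ for all Borel sets $E$, where $m$ is the measure with the given density. *)

theory Defs
  imports "HOL-Analysis.Analysis"
begin

definition Dom :: "(real \<times> real) set" where
  "Dom = {1/2<..1} \<times> {-1..}"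

text \<open>The map F-bar (a representative of the a.e.-defined map; the values on the
  null set where the formulas degenerate, e.g. y = -1 in the first branch, are
  those given by Isabelle's convention x / 0 = 0).\<close>
definition Fbar :: "real \<times> real \<Rightarrow> real \<times> real" where
  "Fbar p = (let x = fst p; y = snd p in
     if x \<le> 2/3 then (1/x - 1, 1/(1+y)) else (-1/x + 2, -1/(2+y)))"

definition mu :: "(real \<times> real) measure" where
  "mu = density (restrict_space lborel Dom) (\<lambda>p. ennreal (1 / (1 + fst p * snd p)^2))"

end

theory Submission
  imports Defs
begin

text \<open>On each branch \<open>(1/2,2/3) \<times> (-1,\<infinity>)\<close> and \<open>(2/3,1) \<times> (-1,\<infinity>)\<close> the map \<open>Fbar\<close> is a
  product \<open>(x, y) \<mapsto> (\<phi> x, \<psi> y)\<close> of two monotone Moebius maps, so by Tonelli and the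
  one-dimensional substitution rule it carries \<open>|\<phi>' x| |\<psi>' y| dx dy\<close> on the branch to Lebesgue
  measure on the image rectangle, \<open>(1/2,1) \<times> (0,\<infinity>)\<close> resp. \<open>(1/2,1) \<times> (-1,0)\<close>.
  The density \<open>\<rho>(x,y) = 1/(1+xy)\<^sup>2\<close> satisfies \<open>\<rho> = |\<phi>'| |\<psi>'| (\<rho> \<circ> Fbar)\<close> there,
  because \<open>1 + \<phi> x \<psi> y = (1+xy)/(x(1+y))\<close> resp. \<open>(1+xy)/(x(2+y))\<close>; and the two image
  rectangles tile the domain up to a null set.\<close>

definition substitution_rule :: "(real \<Rightarrow> real) \<Rightarrow> (real \<Rightarrow> real) \<Rightarrow> real set \<Rightarrow> real set \<Rightarrow> bool" where
  "substitution_rule g g' X Y \<longleftrightarrow>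
     g \<in> borel_measurable borel \<and> g' \<in> borel_measurable borel \<and> X \<in> sets borel \<and> Y \<in> sets borel \<and>
     (\<forall>f \<in> borel_measurable borel.
        (\<integral>\<^sup>+x. f (g x) * ennreal (g' x) * indicator X x \<partial>lborel) = (\<integral>\<^sup>+y. f y * indicator Y y \<partial>lborel))"

lemma substitution_ruleD:
  assumes "substitution_rule g g' X Y" "f \<in> borel_measurable borel"
  shows "(\<integral>\<^sup>+x. f (g x) * ennreal (g' x) * indicator X x \<partial>lborel) = (\<integral>\<^sup>+y. f y * indicator Y y \<partial>lborel)"
  using assms by (simp add: substitution_rule_def)

lemma substitution_rule_measurable:
  assumes "substitution_rule g g' X Y"
  shows "g \<in> borel_measurable borel" "g' \<in> borel_measurable borel" "X \<in> sets borel" "Y \<in> sets borel"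
  using assms by (simp_all add: substitution_rule_def)

lemma image_Icc_deriv_nonneg:
  fixes g g' :: "real \<Rightarrow> real"
  assumes "l \<le> u"
    and deriv: "\<And>x. x \<in> {l..u} \<Longrightarrow> (g has_real_derivative g' x) (at x)"
    and nonneg: "\<And>x. x \<in> {l..u} \<Longrightarrow> 0 \<le> g' x"
  shows "g ` {l..u} = {g l..g u}"
proof
  have "g x \<le> g y" if "l \<le> x" "x \<le> y" "y \<le> u" for x y
    using that by (intro deriv_nonneg_imp_mono[of x y g g']) (auto intro!: deriv nonneg)
  then show "g ` {l..u} \<subseteq> {g l..g u}"
    using \<open>l \<le> u\<close> by auto
  have "continuous_on {l..u} g"
    using deriv by (meson DERIV_isCont continuous_at_imp_continuous_on)
  then show "{g l..g u} \<subseteq> g ` {l..u}"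
    using IVT'[of g l _ u] \<open>l \<le> u\<close> by (force simp: continuous_on_eq_continuous_within)
qed

lemma substitution_rule_einterval:
  fixes g g' :: "real \<Rightarrow> real" and a b :: ereal
  assumes [measurable]: "g \<in> borel_measurable borel" "g' \<in> borel_measurable borel"
    and "a < b"
    and deriv: "\<And>x. x \<in> einterval a b \<Longrightarrow> (g has_real_derivative g' x) (at x)"
    and cont: "continuous_on (einterval a b) g'"
    and nonneg: "\<And>x. x \<in> einterval a b \<Longrightarrow> 0 \<le> g' x"
  shows "substitution_rule g g' (einterval a b) (g ` einterval a b)"
proof -
  obtain u l :: "nat \<Rightarrow> real" where X: "einterval a b = (\<Union>i. {l i..u i})"
    and "incseq u" "decseq l" and lu: "\<And>i. l i < u i"
    using einterval_Icc_approximation[OF \<open>a < b\<close>] by metis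
  have sub: "{l i..u i} \<subseteq> einterval a b" for i
    unfolding X by blast
  have img: "g ` {l i..u i} = {g (l i)..g (u i)}" for i
    using lu[of i] sub[of i] by (intro image_Icc_deriv_nonneg) (auto intro!: deriv nonneg)
  have inc_dom: "incseq (\<lambda>i. {l i..u i})"
    using \<open>incseq u\<close> \<open>decseq l\<close> by (auto simp: incseq_def decseq_def)
  have inc_img: "incseq (\<lambda>i. {g (l i)..g (u i)})"
    using inc_dom unfolding incseq_def img[symmetric] by (metis image_mono)
  have gX: "g ` einterval a b = (\<Union>i. {g (l i)..g (u i)})"
    unfolding X image_UN img ..
  have [measurable]: "g ` einterval a b \<in> sets borel"
    unfolding gX by measurable
  have "(\<integral>\<^sup>+x. f (g x) * ennreal (g' x) * indicator (einterval a b) x \<partial>lborel) =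
        (\<integral>\<^sup>+y. f y * indicator (g ` einterval a b) y \<partial>lborel)"
    if [measurable]: "f \<in> borel_measurable borel" for f
  proof -
    let ?M = "density lborel (\<lambda>x. f (g x) * ennreal (g' x))" and ?N = "density lborel f"
    have "(\<integral>\<^sup>+x. f (g x) * ennreal (g' x) * indicator (einterval a b) x \<partial>lborel) = emeasure ?M (einterval a b)"
      by (simp add: emeasure_density)
    also have "\<dots> = (SUP i. emeasure ?M {l i..u i})"
      unfolding X by (rule SUP_emeasure_incseq[symmetric]) (use inc_dom in auto)
    also have "\<dots> = (SUP i. emeasure ?N {g (l i)..g (u i)})"
    proof (rule SUP_cong[OF refl])
      fix i
      have "(\<integral>\<^sup>+x. f x * indicator {g (l i)..g (u i)} x \<partial>lborel) =
            (\<integral>\<^sup>+x. f (g x) * ennreal (g' x) * indicator {l i..u i} x \<partial>lborel)"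
        using lu[of i] sub[of i]
        by (intro nn_integral_substitution_aux) (auto intro!: deriv nonneg continuous_on_subset[OF cont])
      then show "emeasure ?M {l i..u i} = emeasure ?N {g (l i)..g (u i)}"
        by (simp add: emeasure_density)
    qed
    also have "\<dots> = emeasure ?N (g ` einterval a b)"
      unfolding gX by (rule SUP_emeasure_incseq) (use inc_img in auto)
    also have "\<dots> = (\<integral>\<^sup>+y. f y * indicator (g ` einterval a b) y \<partial>lborel)"
      unfolding gX by (simp add: emeasure_density)
    finally show ?thesis .
  qed
  then show ?thesis
    by (simp add: substitution_rule_def)
qed

lemma nn_integral_lborel_reflect:
  fixes f :: "real \<Rightarrow> ennreal"
  assumes "f \<in> borel_measurable borel"
  shows "(\<integral>\<^sup>+x. f (- x) \<partial>lborel) = (\<integral>\<^sup>+x. f x \<partial>lborel)"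
  using assms by (subst (2) lborel_distr_uminus[symmetric]) (simp add: nn_integral_distr)

lemma substitution_rule_einterval_antimono:
  fixes g g' :: "real \<Rightarrow> real" and a b :: ereal
  assumes [measurable]: "g \<in> borel_measurable borel" "g' \<in> borel_measurable borel"
    and "a < b"
    and deriv: "\<And>x. x \<in> einterval a b \<Longrightarrow> (g has_real_derivative - g' x) (at x)"
    and cont: "continuous_on (einterval a b) g'"
    and nonneg: "\<And>x. x \<in> einterval a b \<Longrightarrow> 0 \<le> g' x"
  shows "substitution_rule g g' (einterval a b) (g ` einterval a b)"
proof -
  have reflect: "x \<in> einterval (- b) (- a) \<longleftrightarrow> - x \<in> einterval a b" for x
    by (cases a; cases b) (auto simp: einterval_iff)
  have image: "(\<lambda>x. g (- x)) ` einterval (- b) (- a) = g ` einterval a b"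
    by (force simp: reflect intro: image_eqI[of _ _ "- _"])
  have rule: "substitution_rule (\<lambda>x. g (- x)) (\<lambda>x. g' (- x)) (einterval (- b) (- a)) (g ` einterval a b)"
    unfolding image[symmetric]
  proof (rule substitution_rule_einterval)
    show "- b < - a" using \<open>a < b\<close> by simp
    show "((\<lambda>x. g (- x)) has_real_derivative g' (- x)) (at x)" if "x \<in> einterval (- b) (- a)" for x
      using DERIV_chain2[OF deriv[of "- x"] DERIV_minus[OF DERIV_ident]] that by (simp add: reflect)
    show "continuous_on (einterval (- b) (- a)) (\<lambda>x. g' (- x))"
      by (rule continuous_on_compose2[OF cont]) (auto intro!: continuous_intros simp: reflect)
  qed (auto simp: reflect intro!: nonneg)
  have [measurable]: "g ` einterval a b \<in> sets borel"
    using substitution_rule_measurable[OF rule] by simp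
  have "(\<integral>\<^sup>+x. f (g x) * ennreal (g' x) * indicator (einterval a b) x \<partial>lborel) =
        (\<integral>\<^sup>+y. f y * indicator (g ` einterval a b) y \<partial>lborel)"
    if [measurable]: "f \<in> borel_measurable borel" for f
  proof -
    have "(\<integral>\<^sup>+x. f (g x) * ennreal (g' x) * indicator (einterval a b) x \<partial>lborel) =
          (\<integral>\<^sup>+x. f (g (- x)) * ennreal (g' (- x)) * indicator (einterval (- b) (- a)) x \<partial>lborel)"
      by (subst nn_integral_lborel_reflect[symmetric]) (auto simp: indicator_def reflect)
    also have "\<dots> = (\<integral>\<^sup>+y. f y * indicator (g ` einterval a b) y \<partial>lborel)"
      by (rule substitution_ruleD[OF rule]) measurable
    finally show ?thesis .
  qed
  then show ?thesis
    by (simp add: substitution_rule_def)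
qed

lemma nn_integral_lborel_pair:
  fixes h :: "real \<times> real \<Rightarrow> ennreal"
  assumes "h \<in> borel_measurable (borel \<Otimes>\<^sub>M borel)"
  shows "(\<integral>\<^sup>+p. h p \<partial>lborel) = (\<integral>\<^sup>+x. \<integral>\<^sup>+y. h (x, y) \<partial>lborel \<partial>lborel)"
  using assms by (simp add: lborel_prod[symmetric] lborel.nn_integral_fst)

lemma substitution_rule_prod:
  fixes h :: "real \<times> real \<Rightarrow> ennreal"
  assumes \<phi>: "substitution_rule \<phi> \<phi>' I I'" and \<psi>: "substitution_rule \<psi> \<psi>' J J'"
    and h: "h \<in> borel_measurable borel"
  shows "(\<integral>\<^sup>+p. h (\<phi> (fst p), \<psi> (snd p)) * ennreal (\<phi>' (fst p)) * ennreal (\<psi>' (snd p)) * indicator (I \<times> J) p \<partial>lborel)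
       = (\<integral>\<^sup>+p. h p * indicator (I' \<times> J') p \<partial>lborel)"
proof -
  have [measurable]: "h \<in> borel_measurable (borel \<Otimes>\<^sub>M borel)"
    using h by (simp add: borel_prod)
  note [measurable] = substitution_rule_measurable[OF \<phi>] substitution_rule_measurable[OF \<psi>]
  define H where "H u = (\<integral>\<^sup>+v. h (u, v) * indicator J' v \<partial>lborel)" for u
  have [measurable]: "H \<in> borel_measurable borel"
    unfolding H_def by measurable
  have inner: "(\<integral>\<^sup>+y. h (\<phi> x, \<psi> y) * ennreal (\<psi>' y) * indicator J y \<partial>lborel) = H (\<phi> x)" for x
    unfolding H_def by (rule substitution_ruleD[OF \<psi>]) measurable
  have "(\<integral>\<^sup>+p. h (\<phi> (fst p), \<psi> (snd p)) * ennreal (\<phi>' (fst p)) * ennreal (\<psi>' (snd p)) * indicator (I \<times> J) p \<partial>lborel)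
      = (\<integral>\<^sup>+x. ennreal (\<phi>' x) * indicator I x *
            (\<integral>\<^sup>+y. h (\<phi> x, \<psi> y) * ennreal (\<psi>' y) * indicator J y \<partial>lborel) \<partial>lborel)"
    by (subst nn_integral_lborel_pair, measurable)
       (auto simp: indicator_times ac_simps simp flip: nn_integral_cmult intro!: nn_integral_cong)
  also have "\<dots> = (\<integral>\<^sup>+x. H (\<phi> x) * ennreal (\<phi>' x) * indicator I x \<partial>lborel)"
    unfolding inner by (simp add: ac_simps)
  also have "\<dots> = (\<integral>\<^sup>+u. H u * indicator I' u \<partial>lborel)"
    by (rule substitution_ruleD[OF \<phi>]) measurable
  also have "\<dots> = (\<integral>\<^sup>+p. h p * indicator (I' \<times> J') p \<partial>lborel)"
    by (subst nn_integral_lborel_pair, measurable)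
       (auto simp: H_def indicator_times ac_simps simp flip: nn_integral_cmult intro!: nn_integral_cong)
  finally show ?thesis .
qed

lemma substitution_rule_recip_sub_one:
  "substitution_rule (\<lambda>x. 1/x - 1) (\<lambda>x. 1/x^2) {1/2<..<2/3} {1/2<..<1}"
proof -
  have "(\<lambda>x. 1/x - 1) ` {1/2<..<2/3} = {1/2<..<1::real}"
    by (intro bij_betw_imp_surj_on bij_betw_byWitness[where f' = "\<lambda>y. 1/(1+y)"])
       (auto simp: field_simps)
  moreover have "substitution_rule (\<lambda>x. 1/x - 1) (\<lambda>x. 1/x^2)
      (einterval (ereal (1/2)) (ereal (2/3))) ((\<lambda>x. 1/x - 1) ` einterval (ereal (1/2)) (ereal (2/3)))"
    by (rule substitution_rule_einterval_antimono)
       (auto intro!: derivative_eq_intros continuous_intros simp: power2_eq_square field_simps)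
  ultimately show ?thesis by simp
qed

lemma substitution_rule_recip_one_add:
  "substitution_rule (\<lambda>y. 1/(1+y)) (\<lambda>y. 1/(1+y)^2) {-1<..} {0<..}"
proof -
  have "(\<lambda>y. 1/(1+y)) ` {-1<..} = {(0::real)<..}"
    by (intro bij_betw_imp_surj_on bij_betw_byWitness[where f' = "\<lambda>v. 1/v - 1"])
       (auto simp: field_simps)
  moreover have "substitution_rule (\<lambda>y. 1/(1+y)) (\<lambda>y. 1/(1+y)^2)
      (einterval (ereal (-1)) \<infinity>) ((\<lambda>y. 1/(1+y)) ` einterval (ereal (-1)) \<infinity>)"
  proof (rule substitution_rule_einterval_antimono)
    show "((\<lambda>y. 1/(1+y)) has_real_derivative - (1/(1+y)^2)) (at y)"
      if "y \<in> einterval (ereal (-1)) \<infinity>" for y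
      using that by (auto intro!: derivative_eq_intros simp: power2_eq_square field_simps)
    show "continuous_on (einterval (ereal (-1)) \<infinity>) (\<lambda>y. 1/(1+y)^2)"
      by (auto intro!: continuous_intros)
  qed auto
  ultimately show ?thesis by simp
qed

lemma substitution_rule_two_sub_recip:
  "substitution_rule (\<lambda>x. -1/x + 2) (\<lambda>x. 1/x^2) {2/3<..<1} {1/2<..<1}"
proof -
  have "(\<lambda>x. -1/x + 2) ` {2/3<..<1} = {1/2<..<1::real}"
    by (intro bij_betw_imp_surj_on bij_betw_byWitness[where f' = "\<lambda>u. 1/(2-u)"])
       (auto simp: field_simps)
  moreover have "substitution_rule (\<lambda>x. -1/x + 2) (\<lambda>x. 1/x^2)
      (einterval (ereal (2/3)) (ereal 1)) ((\<lambda>x. -1/x + 2) ` einterval (ereal (2/3)) (ereal 1))"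
    by (rule substitution_rule_einterval)
       (auto intro!: derivative_eq_intros continuous_intros simp: power2_eq_square field_simps)
  ultimately show ?thesis by simp
qed

lemma substitution_rule_neg_recip_two_add:
  "substitution_rule (\<lambda>y. -1/(2+y)) (\<lambda>y. 1/(2+y)^2) {-1<..} {-1<..<0}"
proof -
  have "(\<lambda>y. -1/(2+y)) ` {-1<..} = {-1<..<0::real}"
    by (intro bij_betw_imp_surj_on bij_betw_byWitness[where f' = "\<lambda>v. -1/v - 2"])
       (auto simp: field_simps)
  moreover have "substitution_rule (\<lambda>y. -1/(2+y)) (\<lambda>y. 1/(2+y)^2)
      (einterval (ereal (-1)) \<infinity>) ((\<lambda>y. -1/(2+y)) ` einterval (ereal (-1)) \<infinity>)"
  proof (rule substitution_rule_einterval)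
    show "((\<lambda>y. -1/(2+y)) has_real_derivative 1/(2+y)^2) (at y)"
      if "y \<in> einterval (ereal (-1)) \<infinity>" for y
      using that by (auto intro!: derivative_eq_intros simp: power2_eq_square field_simps)
    show "continuous_on (einterval (ereal (-1)) \<infinity>) (\<lambda>y. 1/(2+y)^2)"
      by (auto intro!: continuous_intros)
  qed auto
  ultimately show ?thesis by simp
qed

lemma nn_integral_density_pullback_prod:
  fixes T :: "real \<times> real \<Rightarrow> real \<times> real" and \<rho> :: "real \<times> real \<Rightarrow> real"
    and k :: "real \<times> real \<Rightarrow> ennreal"
  assumes \<phi>: "substitution_rule \<phi> \<phi>' I I'" and \<psi>: "substitution_rule \<psi> \<psi>' J J'"
    and T: "\<And>x y. x \<in> I \<Longrightarrow> y \<in> J \<Longrightarrow> T (x, y) = (\<phi> x, \<psi> y)"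
    and \<rho>: "\<And>x y. x \<in> I \<Longrightarrow> y \<in> J \<Longrightarrow> \<rho> (x, y) = \<phi>' x * \<psi>' y * \<rho> (\<phi> x, \<psi> y)"
    and nonneg: "\<And>x. x \<in> I \<Longrightarrow> 0 \<le> \<phi>' x" "\<And>y. y \<in> J \<Longrightarrow> 0 \<le> \<psi>' y" "\<And>p. 0 \<le> \<rho> p"
    and [measurable]: "k \<in> borel_measurable borel" "\<rho> \<in> borel_measurable borel"
  shows "(\<integral>\<^sup>+p. k (T p) * ennreal (\<rho> p) * indicator (I \<times> J) p \<partial>lborel)
       = (\<integral>\<^sup>+p. k p * ennreal (\<rho> p) * indicator (I' \<times> J') p \<partial>lborel)"
proof -
  have "(\<integral>\<^sup>+p. k (T p) * ennreal (\<rho> p) * indicator (I \<times> J) p \<partial>lborel)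
      = (\<integral>\<^sup>+p. k (\<phi> (fst p), \<psi> (snd p)) * ennreal (\<rho> (\<phi> (fst p), \<psi> (snd p)))
               * ennreal (\<phi>' (fst p)) * ennreal (\<psi>' (snd p)) * indicator (I \<times> J) p \<partial>lborel)"
  proof (intro nn_integral_cong)
    fix p :: "real \<times> real"
    show "k (T p) * ennreal (\<rho> p) * indicator (I \<times> J) p
        = k (\<phi> (fst p), \<psi> (snd p)) * ennreal (\<rho> (\<phi> (fst p), \<psi> (snd p)))
            * ennreal (\<phi>' (fst p)) * ennreal (\<psi>' (snd p)) * indicator (I \<times> J) p"
      by (cases p) (auto simp: T \<rho> nonneg ennreal_mult indicator_def ac_simps)
  qed
  also have "\<dots> = (\<integral>\<^sup>+p. k p * ennreal (\<rho> p) * indicator (I' \<times> J') p \<partial>lborel)"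
    by (rule substitution_rule_prod[OF \<phi> \<psi>, of "\<lambda>q. k q * ennreal (\<rho> q)"]) measurable
  finally show ?thesis .
qed

lemma AE_lborel_pair_avoids:
  fixes A B :: "real set"
  assumes "finite A" "finite B"
  shows "AE p in lborel. fst p \<notin> A \<and> snd p \<notin> B"
proof (rule AE_I')
  show "A \<times> UNIV \<union> UNIV \<times> B \<in> null_sets lborel"
    unfolding lborel_prod[symmetric] using assms
    by (intro null_sets.Un lborel.times_in_null_sets1 lborel.times_in_null_sets2 finite_imp_null_set_lborel) auto
qed auto

definition mu_density :: "real \<times> real \<Rightarrow> real" where
  "mu_density p = 1 / (1 + fst p * snd p)^2"

lemma mu_density_measurable[measurable]: "mu_density \<in> borel_measurable borel"
  unfolding mu_density_def borel_prod[symmetric] by measurable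

lemma mu_density_nonneg: "0 \<le> mu_density p"
  by (simp add: mu_density_def)

text \<open>No hypothesis \<open>1 + x * y \<noteq> 0\<close> is needed in the two Jacobian identities below: where it
  fails, both sides vanish by the convention \<open>x / 0 = 0\<close>.\<close>

lemma mu_density_first_branch:
  fixes x y :: real
  assumes "x \<noteq> 0" "y \<noteq> -1"
  shows "mu_density (x, y) = 1/x^2 * (1/(1+y)^2) * mu_density (1/x - 1, 1/(1+y))"
proof -
  have y: "1 + y \<noteq> 0"
    using assms by auto
  have "x + x*y \<noteq> 0"
    using assms(1) y by (metis mult_eq_0_iff distrib_left mult.right_neutral)
  then have "1 + (1/x - 1) * (1/(1+y)) = (1 + x*y) / (x*(1+y))"
    using assms(1) by (simp add: field_simps)
  then have "mu_density (1/x - 1, 1/(1+y)) = x^2 * (1+y)^2 * mu_density (x, y)"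
    by (simp add: mu_density_def power_divide power_mult_distrib)
  then show ?thesis
    using assms(1) y by simp
qed

lemma mu_density_second_branch:
  fixes x y :: real
  assumes "x \<noteq> 0" "y \<noteq> -2"
  shows "mu_density (x, y) = 1/x^2 * (1/(2+y)^2) * mu_density (-1/x + 2, -1/(2+y))"
proof -
  have y: "2 + y \<noteq> 0"
    using assms by auto
  have "x*y + x*2 \<noteq> 0"
    using assms(1) y by (metis add.commute mult_eq_0_iff distrib_left)
  then have "1 + (-1/x + 2) * (-1/(2+y)) = (1 + x*y) / (x*(2+y))"
    using assms(1) by (simp add: field_simps)
  then have "mu_density (-1/x + 2, -1/(2+y)) = x^2 * (2+y)^2 * mu_density (x, y)"
    by (simp add: mu_density_def power_divide power_mult_distrib)
  then show ?thesis
    using assms(1) y by simp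
qed

lemma Fbar_measurable[measurable]: "Fbar \<in> borel_measurable borel"
  unfolding Fbar_def Let_def borel_prod[symmetric] by measurable

lemma Dom_measurable[measurable]: "Dom \<in> sets borel"
  unfolding Dom_def by (rule borel_Times; measurable)

lemma AE_indicator_Dom_branches:
  "AE p in lborel. indicator Dom p
     = indicator ({1/2<..<2/3} \<times> {-1<..}) p + (indicator ({2/3<..<1} \<times> {-1<..}) p :: ennreal)"
proof -
  have "AE p in lborel. fst p \<notin> {2/3, 1::real} \<and> snd p \<notin> {-1::real}"
    by (rule AE_lborel_pair_avoids) auto
  then show ?thesis
    by eventually_elim (auto simp: Dom_def indicator_def)
qed

lemma AE_indicator_Dom_images:
  "AE p in lborel. indicator Dom p
     = indicator ({1/2<..<1} \<times> {0<..}) p + (indicator ({1/2<..<1} \<times> {-1<..<0}) p :: ennreal)"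
proof -
  have "AE p in lborel. fst p \<notin> {1::real} \<and> snd p \<notin> {-1, 0::real}"
    by (rule AE_lborel_pair_avoids) auto
  then show ?thesis
    by eventually_elim (auto simp: Dom_def indicator_def)
qed

lemma nn_integral_Fbar_invariant:
  fixes k :: "real \<times> real \<Rightarrow> ennreal"
  assumes k[measurable]: "k \<in> borel_measurable borel"
  shows "(\<integral>\<^sup>+p. k (Fbar p) * ennreal (mu_density p) * indicator Dom p \<partial>lborel)
       = (\<integral>\<^sup>+p. k p * ennreal (mu_density p) * indicator Dom p \<partial>lborel)"
proof -
  let ?B1 = "{1/2<..<2/3} \<times> {-1<..} :: (real \<times> real) set" and ?B2 = "{2/3<..<1} \<times> {-1<..} :: (real \<times> real) set"
  let ?C1 = "{1/2<..<1} \<times> {0<..} :: (real \<times> real) set" and ?C2 = "{1/2<..<1} \<times> {-1<..<0} :: (real \<times> real) set"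
  have [measurable]: "?B1 \<in> sets borel" "?B2 \<in> sets borel" "?C1 \<in> sets borel" "?C2 \<in> sets borel"
    by (rule borel_Times; measurable)+
  have first: "(\<integral>\<^sup>+p. k (Fbar p) * ennreal (mu_density p) * indicator ?B1 p \<partial>lborel)
             = (\<integral>\<^sup>+p. k p * ennreal (mu_density p) * indicator ?C1 p \<partial>lborel)"
    by (rule nn_integral_density_pullback_prod[OF substitution_rule_recip_sub_one substitution_rule_recip_one_add
          _ _ _ _ mu_density_nonneg k mu_density_measurable])
       (auto simp: Fbar_def mu_density_first_branch)
  have second: "(\<integral>\<^sup>+p. k (Fbar p) * ennreal (mu_density p) * indicator ?B2 p \<partial>lborel)
              = (\<integral>\<^sup>+p. k p * ennreal (mu_density p) * indicator ?C2 p \<partial>lborel)"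
    by (rule nn_integral_density_pullback_prod[OF substitution_rule_two_sub_recip substitution_rule_neg_recip_two_add
          _ _ _ _ mu_density_nonneg k mu_density_measurable])
       (auto simp: Fbar_def mu_density_second_branch)
  have "(\<integral>\<^sup>+p. k (Fbar p) * ennreal (mu_density p) * indicator Dom p \<partial>lborel)
      = (\<integral>\<^sup>+p. k (Fbar p) * ennreal (mu_density p) * indicator ?B1 p
               + k (Fbar p) * ennreal (mu_density p) * indicator ?B2 p \<partial>lborel)"
    using AE_indicator_Dom_branches by (intro nn_integral_cong_AE) (auto simp: distrib_left)
  also have "\<dots> = (\<integral>\<^sup>+p. k (Fbar p) * ennreal (mu_density p) * indicator ?B1 p \<partial>lborel)
                  + (\<integral>\<^sup>+p. k (Fbar p) * ennreal (mu_density p) * indicator ?B2 p \<partial>lborel)"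
    by (rule nn_integral_add) measurable
  also have "\<dots> = (\<integral>\<^sup>+p. k p * ennreal (mu_density p) * indicator ?C1 p \<partial>lborel)
                  + (\<integral>\<^sup>+p. k p * ennreal (mu_density p) * indicator ?C2 p \<partial>lborel)"
    by (simp only: first second)
  also have "\<dots> = (\<integral>\<^sup>+p. k p * ennreal (mu_density p) * indicator ?C1 p
                         + k p * ennreal (mu_density p) * indicator ?C2 p \<partial>lborel)"
    by (rule nn_integral_add[symmetric]) measurable
  also have "\<dots> = (\<integral>\<^sup>+p. k p * ennreal (mu_density p) * indicator Dom p \<partial>lborel)"
    using AE_indicator_Dom_images by (intro nn_integral_cong_AE) (auto simp: distrib_left)
  finally show ?thesis .
qed

lemma emeasure_mu:
  assumes [measurable]: "A \<in> sets borel"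
  shows "emeasure mu (A \<inter> Dom) = (\<integral>\<^sup>+p. indicator A p * ennreal (mu_density p) * indicator Dom p \<partial>lborel)"
proof -
  have "emeasure mu (A \<inter> Dom)
      = (\<integral>\<^sup>+p. ennreal (mu_density p) * indicator (A \<inter> Dom) p \<partial>restrict_space lborel Dom)"
    unfolding mu_def mu_density_def[symmetric]
    by (intro emeasure_density measurable_restrict_space1) (auto simp: sets_restrict_space_iff)
  also have "\<dots> = (\<integral>\<^sup>+p. ennreal (mu_density p) * indicator (A \<inter> Dom) p * indicator Dom p \<partial>lborel)"
    by (simp add: nn_integral_restrict_space)
  also have "\<dots> = (\<integral>\<^sup>+p. indicator A p * ennreal (mu_density p) * indicator Dom p \<partial>lborel)"
    by (auto intro!: nn_integral_cong simp: indicator_def)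
  finally show ?thesis .
qed

theorem theorem7p2:
  shows "\<forall>E \<in> sets mu. emeasure mu (Fbar -` E \<inter> space mu) = emeasure mu E"
proof
  fix E assume "E \<in> sets mu"
  then have E: "E \<in> sets borel" "E \<inter> Dom = E"
    by (auto simp: mu_def sets_restrict_space_iff)
  have "space mu = Dom"
    by (simp add: mu_def space_restrict_space)
  then have "emeasure mu (Fbar -` E \<inter> space mu)
      = (\<integral>\<^sup>+p. indicator E (Fbar p) * ennreal (mu_density p) * indicator Dom p \<partial>lborel)"
    using emeasure_mu[OF measurable_sets_borel[OF Fbar_measurable E(1)]] by (simp add: indicator_vimage)
  also have "\<dots> = emeasure mu E"
    using nn_integral_Fbar_invariant[of "indicator E"] emeasure_mu[OF E(1)] E by simp
  finally show "emeasure mu (Fbar -` E \<inter> space mu) = emeasure mu E" .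
qed

end
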